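(* Let $n\in\{2,\dots,r\}$, $\sigma\in\mathcal{S}_n$ and $\alpha\in\mathcal{J}_n:=\bigcup_{m=\lceil n/2\rceil}^n\mathcal{J}_n^m$. Then the series defining $\hat F_n^{\sigma,\alpha}$ converges and $\hat F_n^{\sigma,\alpha}:\mathfrak{g}_{CM}^{\otimes p_\alpha}\to\mathfrak{g}_{CM}$ is Hilbert–Schmidt.
   Context: $\mathfrak{g}_{CM}$ is a real separable Hilbert space with a Lie bracket nilpotent of step $r$ (iterated brackets of more than $r$ elements vanish) which is Hilbert–Schmidt ($\sum_{i,j}\|[e_i,e_j]\|^2<\infty$ for an orthonormal basis). Define $F_n(k_1\otimes\cdots\otimes k_n)=[[\cdots[k_1,k_2],\cdots],k_n]$ and $F_n^\sigma(k_1\otimes\cdots\otimes k_n)=F_n(k_{\sigma(1)}\otimes\cdots\otimes k_{\sigma(n)})$ for $\sigma$ in the symmetric group $\mathcal{S}_n$. $\mathcal{J}_n^m=\{\alpha\in\{1,2\}^m:\sum_i\alpha_i=n\}$, $p_\alpha=\#\{i:\alpha_i=1\}$, $q_\alpha=\#\{i:\alpha_i=2\}$. With $\{h_j\}$ an orthonormal basis of $\mathfrak{g}_{CM}$, $\hat F_n^{\sigma,\alpha}(k_1\otimes\cdots\otimes k_{p_\alpha})=\sum_{j_1,\dots,j_{q_\alpha}=1}^\infty F_n^\sigma(X_1\otimes\cdots\otimes X_m)$, where, reading $\alpha$ from left to right, $X_i$ is the next unused $k$ (starting with $k_1$) if $\alpha_i=1$, and $X_i=h_{j_l}\otimes h_{j_l}$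 if $\alpha_i=2$ and $\alpha_i$ is the $l$-th entry of $\alpha$ equal to $2$. *)

theory Defs
  imports "HOL-Analysis.Analysis"
begin

definition orthonormal_basis :: "'a::real_inner set \<Rightarrow> bool" where
  "orthonormal_basis B \<longleftrightarrow> (\<forall>x\<in>B. norm x = 1) \<and> pairwise orthogonal B \<and> closure (span B) = UNIV"

text \<open>Left-normed iterated bracket F_n(k_1,...,k_n) = [[...[k_1,k_2],...],k_n];
  elementary tensors k_1 \<otimes> ... \<otimes> k_n are represented by the list [k_1,...,k_n].\<close>
definition iter_bracket :: "('a \<Rightarrow> 'a \<Rightarrow> 'a) \<Rightarrow> 'a list \<Rightarrow> 'a" where
  "iter_bracket br xs = foldl br (hd xs) (tl xs)"

text \<open>F_n^sigma(k_1,...,k_n) = F_n(k_{sigma(1)},...,k_{sigma(n)}); indices are 0-based, sigma permutes {0..<n}.\<close>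
definition perm_bracket :: "('a \<Rightarrow> 'a \<Rightarrow> 'a) \<Rightarrow> nat \<Rightarrow> (nat \<Rightarrow> nat) \<Rightarrow> 'a list \<Rightarrow> 'a" where
  "perm_bracket br n \<sigma> xs = iter_bracket br (map (\<lambda>i. xs ! \<sigma> i) [0..<n])"

definition hs_nilpotent_lie :: "'a::{real_inner,complete_space} set \<Rightarrow> ('a \<Rightarrow> 'a \<Rightarrow> 'a) \<Rightarrow> nat \<Rightarrow> bool" where
  "hs_nilpotent_lie B br r \<longleftrightarrow>
     bounded_bilinear br \<and>
     (\<forall>x y. br x y = - br y x) \<and>
     (\<forall>x y z. br x (br y z) + br y (br z x) + br z (br x y) = 0) \<and>
     (\<forall>xs. length xs > r \<longrightarrow> iter_bracket br xs = 0) \<and>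
     (\<lambda>(x, y). (norm (br x y))\<^sup>2) summable_on (B \<times> B)"

definition J :: "nat \<Rightarrow> nat \<Rightarrow> nat list set" where
  "J n m = {\<alpha>. length \<alpha> = m \<and> set \<alpha> \<subseteq> {1,2} \<and> sum_list \<alpha> = n}"

definition Jn :: "nat \<Rightarrow> nat list set" where
  "Jn n = (\<Union>m\<in>{nat \<lceil>real n / 2\<rceil>..n}. J n m)"

definition p_of :: "nat list \<Rightarrow> nat" where "p_of \<alpha> = length (filter (\<lambda>a. a = 1) \<alpha>)"
definition q_of :: "nat list \<Rightarrow> nat" where "q_of \<alpha> = length (filter (\<lambda>a. a = 2) \<alpha>)"

text \<open>Reading alpha left to right: an entry 1 consumes the next k, an entry 2 inserts h_j \<otimes> h_j
  for the next summation index j.\<close>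
fun interleave :: "nat list \<Rightarrow> 'a list \<Rightarrow> 'a list \<Rightarrow> 'a list" where
  "interleave [] ks hs = []"
| "interleave (a # as) ks hs =
     (if a = 1 then hd ks # interleave as (tl ks) hs
      else hd hs # hd hs # interleave as ks (tl hs))"

definition tuples :: "'a set \<Rightarrow> nat \<Rightarrow> 'a list set" where
  "tuples B q = {hs. length hs = q \<and> set hs \<subseteq> B}"

definition Fhat_term :: "('a \<Rightarrow> 'a \<Rightarrow> 'a) \<Rightarrow> nat \<Rightarrow> (nat \<Rightarrow> nat) \<Rightarrow> nat list \<Rightarrow> 'a list \<Rightarrow> 'a list \<Rightarrow> 'a" where
  "Fhat_term br n \<sigma> \<alpha> ks hs = perm_bracket br n \<sigma> (interleave \<alpha> ks hs)"

definition Fhat :: "'a::{real_normed_vector} set \<Rightarrow> ('a \<Rightarrow> 'a \<Rightarrow> 'a) \<Rightarrow> nat \<Rightarrow> (nat \<Rightarrow> nat) \<Rightarrow> nat list \<Rightarrow> 'a list \<Rightarrow> 'a" where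
  "Fhat B br n \<sigma> \<alpha> ks = infsum (Fhat_term br n \<sigma> \<alpha> ks) (tuples B (q_of \<alpha>))"

text \<open>A map T defined on elementary tensors of H^{\<otimes>p} (lists of length p) is Hilbert-Schmidt:
  it is multilinear and bounded (so extends to a bounded operator on the Hilbert tensor product)
  and the sum of squared norms over the product orthonormal basis is finite.\<close>
definition hilbert_schmidt_multi :: "'a::real_normed_vector set \<Rightarrow> nat \<Rightarrow> ('a list \<Rightarrow> 'b::real_normed_vector) \<Rightarrow> bool" where
  "hilbert_schmidt_multi B p T \<longleftrightarrow>
     (\<forall>ks i. length ks = p \<and> i < p \<longrightarrow> linear (\<lambda>x. T (ks[i := x]))) \<and>
     (\<exists>C. \<forall>ks. length ks = p \<longrightarrow> norm (T ks) \<le> C * prod_list (map norm ks)) \<and>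
     (\<lambda>es. (norm (T es))\<^sup>2) summable_on tuples B p"

end

theory Submission
  imports Defs
begin

(* Every summand of Fhat is an iterated bracket of a fixed word in which each k_a occurs
   once and each h_j twice. All brackets after the first are estimated by
   norm [y, h] <= ||ad h||_HS * norm y, where ||ad h||_HS^2 = sum over e in B of
   norm [h, e]^2 and the sum of these over h in B is the Hilbert-Schmidt norm squared
   of the bracket. One copy of every h_j goes into the factor prod_j ||ad h_j||_HS, all
   remaining factors together with the first bracket into a second factor; both are
   square-summable over the h_j (and, when the k_a range over B, over the k_a as well),
   so Cauchy-Schwarz gives absolute convergence, a bound C * prod_a norm k_a and
   square-summability of Fhat over the product basis. *)

section \<open>Unconditional sums\<close>

lemma has_sum_mult_Times:
  fixes f g :: "_ \<Rightarrow> real"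
  assumes "(f has_sum a) A" "(g has_sum b) B"
    and "\<And>x. x \<in> A \<Longrightarrow> f x \<ge> 0" "\<And>y. y \<in> B \<Longrightarrow> g y \<ge> 0"
  shows "((\<lambda>(x, y). f x * g y) has_sum (a * b)) (A \<times> B)"
proof -
  have rows: "((\<lambda>y. (\<lambda>(x, y). f x * g y) (x, y)) has_sum f x * b) B" if "x \<in> A" for x
    using assms(2) by (simp add: has_sum_cmult_right)
  have cols: "((\<lambda>x. f x * b) has_sum a * b) A"
    using assms(1) by (rule has_sum_cmult_left)
  have "(\<lambda>(x, y). f x * g y) summable_on A \<times> B"
    using rows cols assms(3,4)
    by (intro summable_on_SigmaI[where g = "\<lambda>x. f x * b"]) (auto intro: has_sum_imp_summable)
  then show ?thesis
    using has_sum_SigmaI[OF rows cols] by blast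
qed

lemma has_sum_prod_PiE:
  fixes f :: "'i \<Rightarrow> 'b \<Rightarrow> real"
  assumes "finite I" "\<And>i. i \<in> I \<Longrightarrow> (f i has_sum s i) (S i)"
    and "\<And>i y. i \<in> I \<Longrightarrow> y \<in> S i \<Longrightarrow> f i y \<ge> 0"
  shows "((\<lambda>g. \<Prod>i\<in>I. f i (g i)) has_sum (\<Prod>i\<in>I. s i)) (PiE I S)"
  using assms
proof (induction I rule: finite_induct)
  case empty
  then show ?case by (simp add: has_sum_finiteI)
next
  case (insert x I)
  have inj: "inj_on (\<lambda>(g, y). g(x := y)) (PiE I S \<times> S x)"
    using \<open>x \<notin> I\<close> by (rule inj_combinator')
  have PiE_insert: "PiE (insert x I) S = (\<lambda>(g, y). g(x := y)) ` (PiE I S \<times> S x)"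
    unfolding PiE_insert_eq
    by (subst swap_product [symmetric]) (simp add: image_image case_prod_unfold)
  have "((\<lambda>(g, y). (\<Prod>i\<in>I. f i (g i)) * f x y) has_sum (\<Prod>i\<in>I. s i) * s x) (PiE I S \<times> S x)"
    using insert by (intro has_sum_mult_Times) (auto intro!: prod_nonneg simp: PiE_iff)
  moreover have "(\<lambda>g. \<Prod>i\<in>insert x I. f i (g i)) \<circ> (\<lambda>(g, y). g(x := y))
      = (\<lambda>(g, y). (\<Prod>i\<in>I. f i (g i)) * f x y)"
  proof -
    have "(\<Prod>i\<in>I. f i ((g(x := y)) i)) = (\<Prod>i\<in>I. f i (g i))" for g y
      using insert.hyps by (intro prod.cong) auto
    then show ?thesis using insert.hyps by (auto simp: fun_eq_iff mult.commute)
  qed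
  ultimately show ?case
    unfolding PiE_insert has_sum_reindex[OF inj] using insert.hyps by (simp add: mult.commute)
qed

lemma has_sum_PiE_update_pair_iff:
  assumes "j0 \<in> I" "j1 \<in> I" "j0 \<noteq> j1"
  shows "((\<lambda>((x, y), g). H (g(j0 := x, j1 := y))) has_sum s) ((S j0 \<times> S j1) \<times> PiE (I - {j0, j1}) S)
    \<longleftrightarrow> (H has_sum s) (PiE I S)"
proof (rule has_sum_reindex_bij_witness[where j = "\<lambda>((x, y), g). g(j0 := x, j1 := y)"
      and i = "\<lambda>g. ((g j0, g j1), restrict g (I - {j0, j1}))"])
  fix a assume "a \<in> (S j0 \<times> S j1) \<times> PiE (I - {j0, j1}) S"
  then obtain x y g where a: "a = ((x, y), g)" and xy: "x \<in> S j0" "y \<in> S j1"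
    and g: "g \<in> PiE (I - {j0, j1}) S"
    by auto
  have "(g(j0 := x, j1 := y)) i \<in> S i" if "i \<in> I" for i
    using that xy g by (cases "i = j0"; cases "i = j1") (auto simp: PiE_iff)
  moreover have "(g(j0 := x, j1 := y)) i = undefined" if "i \<notin> I" for i
    using that assms PiE_arb[OF g, of i] by auto
  ultimately show "(\<lambda>((x, y), g). g(j0 := x, j1 := y)) a \<in> PiE I S"
    unfolding a by (auto intro: PiE_I)
  have "restrict (g(j0 := x, j1 := y)) (I - {j0, j1}) = g"
    using PiE_arb[OF g] by (auto simp: fun_eq_iff)
  then show "(\<lambda>g. ((g j0, g j1), restrict g (I - {j0, j1}))) ((\<lambda>((x, y), g). g(j0 := x, j1 := y)) a) = a"
    using assms(3) by (simp add: a)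
next
  fix b assume b: "b \<in> PiE I S"
  have "(restrict b (I - {j0, j1}))(j0 := b j0, j1 := b j1) = b"
    using PiE_arb[OF b] by (auto simp: fun_eq_iff)
  then show "(\<lambda>((x, y), g). g(j0 := x, j1 := y)) ((\<lambda>g. ((g j0, g j1), restrict g (I - {j0, j1}))) b) = b"
    by simp
  show "(\<lambda>g. ((g j0, g j1), restrict g (I - {j0, j1}))) b \<in> (S j0 \<times> S j1) \<times> PiE (I - {j0, j1}) S"
    using b assms(1,2) by (auto simp: PiE_iff)
qed (auto simp: case_prod_unfold)

lemma has_sum_PiE_pair:
  fixes \<Phi> :: "'b \<times> 'b \<Rightarrow> real" and f :: "'i \<Rightarrow> 'b \<Rightarrow> real"
  assumes "finite I" "j0 \<in> I" "j1 \<in> I" "j0 \<noteq> j1"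
    and "(\<Phi> has_sum s0) (S j0 \<times> S j1)" "\<And>z. z \<in> S j0 \<times> S j1 \<Longrightarrow> \<Phi> z \<ge> 0"
    and "\<And>i. i \<in> I - {j0, j1} \<Longrightarrow> (f i has_sum s i) (S i)"
    and "\<And>i y. i \<in> I - {j0, j1} \<Longrightarrow> y \<in> S i \<Longrightarrow> f i y \<ge> 0"
  shows "((\<lambda>g. \<Phi> (g j0, g j1) * (\<Prod>i\<in>I - {j0, j1}. f i (g i)))
           has_sum (s0 * (\<Prod>i\<in>I - {j0, j1}. s i))) (PiE I S)"
proof -
  let ?J = "I - {j0, j1}"
  have "((\<lambda>(z, g). \<Phi> z * (\<Prod>i\<in>?J. f i (g i))) has_sum (s0 * (\<Prod>i\<in>?J. s i)))
          ((S j0 \<times> S j1) \<times> PiE ?J S)"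
  proof (intro has_sum_mult_Times has_sum_prod_PiE)
    show "0 \<le> (\<Prod>i\<in>?J. f i (g i))" if "g \<in> PiE ?J S" for g
      using that assms(8) by (intro prod_nonneg) (auto simp: PiE_iff)
  qed (use assms in auto)
  moreover have "(\<Prod>i\<in>?J. f i ((g(j0 := x, j1 := y)) i)) = (\<Prod>i\<in>?J. f i (g i))" for g x y
    by (intro prod.cong) auto
  ultimately show ?thesis
    using assms(4) has_sum_PiE_update_pair_iff[OF assms(2-4), where
        H = "\<lambda>g. \<Phi> (g j0, g j1) * (\<Prod>i\<in>?J. f i (g i))"]
    by (simp add: case_prod_unfold)
qed

lemma Cauchy_Schwarz_infsum:
  fixes t a b :: "'x \<Rightarrow> real"
  assumes t: "\<And>x. x \<in> X \<Longrightarrow> 0 \<le> t x" "\<And>x. x \<in> X \<Longrightarrow> t x \<le> a x * b x"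
    and U: "((\<lambda>x. (a x)\<^sup>2) has_sum U) X" and W: "((\<lambda>x. (b x)\<^sup>2) has_sum W) X"
  shows "t summable_on X" "infsum t X \<le> sqrt U * sqrt W"
proof -
  have "t x \<le> (a x)\<^sup>2 + (b x)\<^sup>2" if "x \<in> X" for x
    using t[OF that] sum_squares_bound[of "a x" "b x"] by (simp add: power2_eq_square)
  moreover have "(\<lambda>x. (a x)\<^sup>2 + (b x)\<^sup>2) summable_on X"
    using has_sum_imp_summable[OF U] has_sum_imp_summable[OF W] by (rule summable_on_add)
  ultimately show ts: "t summable_on X"
    by (intro summable_on_comparison_test[OF _ _ t(1)]) auto
  show "infsum t X \<le> sqrt U * sqrt W"
  proof (rule infsum_le_finite_sums[OF ts])
    fix F assume F: "finite F" "F \<subseteq> X"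
    have "sum t F \<le> (\<Sum>x\<in>F. a x * b x)"
      using F t(2) by (intro sum_mono) blast
    also have "\<dots> \<le> sqrt ((\<Sum>x\<in>F. (a x)\<^sup>2) * (\<Sum>x\<in>F. (b x)\<^sup>2))"
      by (rule real_le_rsqrt) (rule Cauchy_Schwarz_ineq_sum)
    also have "\<dots> \<le> sqrt (U * W)"
      using finite_sum_le_has_sum[OF U F] finite_sum_le_has_sum[OF W F]
      by (intro real_sqrt_le_mono mult_mono sum_nonneg has_sum_nonneg[OF U]) auto
    finally show "sum t F \<le> sqrt U * sqrt W" by (simp add: real_sqrt_mult)
  qed
qed

lemma nonneg_summable_on_tail_le:
  fixes f :: "'i \<Rightarrow> real"
  assumes "f summable_on A" "\<And>x. x \<in> A \<Longrightarrow> 0 \<le> f x" "e > 0"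
  obtains F0 where "finite F0" "F0 \<subseteq> A" "\<And>G. finite G \<Longrightarrow> G \<subseteq> A - F0 \<Longrightarrow> sum f G \<le> e"
proof -
  obtain F0 where F0: "finite F0" "F0 \<subseteq> A" and close: "dist (sum f F0) (infsum f A) \<le> e"
    using infsum_finite_approximation[OF assms(1,3)] by blast
  show ?thesis
  proof (rule that[OF F0])
    fix G assume G: "finite G" "G \<subseteq> A - F0"
    have "sum f F0 + sum f G = sum f (F0 \<union> G)"
      using G F0 by (intro sum.union_disjoint[symmetric]) auto
    also have "\<dots> \<le> infsum f A"
      using G F0 assms(1,2) by (intro finite_sum_le_infsum) auto
    finally show "sum f G \<le> e"
      using close unfolding dist_real_def abs_le_iff by linarith
  qed
qed

text \<open>The library's \<open>abs_summable_summable\<close> is stated for sort \<open>banach\<close>, which a type variable of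
  sort \<open>{real_normed_vector, complete_space}\<close> does not have.\<close>
lemma norm_summable_imp_summable_on_complete:
  fixes f :: "'i \<Rightarrow> 'a::{real_normed_vector, complete_space}"
  assumes "(\<lambda>x. norm (f x)) summable_on A"
  shows "f summable_on A"
proof -
  have "cauchy_filter (filtermap (sum f) (finite_subsets_at_top A))"
    unfolding cauchy_filter_metric_filtermap
  proof (intro allI impI)
    fix e :: real assume "e > 0"
    then obtain F0 where F0: "finite F0" "F0 \<subseteq> A"
      and tail: "\<And>G. finite G \<Longrightarrow> G \<subseteq> A - F0 \<Longrightarrow> (\<Sum>x\<in>G. norm (f x)) \<le> e / 3"
      using nonneg_summable_on_tail_le[OF assms, of "e / 3"] by auto
    let ?P = "\<lambda>F. finite F \<and> F0 \<subseteq> F \<and> F \<subseteq> A"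
    have "dist (sum f F) (sum f F') < e" if "?P F" "?P F'" for F F'
    proof -
      have "sum f F - sum f F' = sum f (F - F0) - sum f (F' - F0)"
        using that by (simp add: sum_diff)
      then have "dist (sum f F) (sum f F') \<le> norm (sum f (F - F0)) + norm (sum f (F' - F0))"
        by (simp add: dist_norm norm_triangle_ineq4)
      also have "\<dots> \<le> (\<Sum>x\<in>F - F0. norm (f x)) + (\<Sum>x\<in>F' - F0. norm (f x))"
        by (intro add_mono norm_sum)
      also have "\<dots> \<le> e / 3 + e / 3"
        using that by (intro add_mono tail) auto
      finally show ?thesis using \<open>e > 0\<close> by linarith
    qed
    moreover have "eventually ?P (finite_subsets_at_top A)"
      unfolding eventually_finite_subsets_at_top using F0 by auto
    ultimately show "\<exists>P. eventually P (finite_subsets_at_top A) \<and>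
        (\<forall>F F'. P F \<and> P F' \<longrightarrow> dist (sum f F) (sum f F') < e)"
      by (intro exI[of _ ?P]) simp
  qed
  then have "convergent_filter (filtermap (sum f) (finite_subsets_at_top A))"
    by (rule cauchy_filter_convergent)
  then obtain s where "filtermap (sum f) (finite_subsets_at_top A) \<le> nhds s"
    unfolding convergent_filter_iff ..
  then show ?thesis
    unfolding summable_on_def has_sum_def filterlim_def ..
qed

section \<open>Iterated brackets\<close>

lemma norm_foldl_le:
  fixes br :: "'a::real_normed_vector \<Rightarrow> 'a \<Rightarrow> 'a"
  assumes "\<And>z Z. z \<in> set zs \<Longrightarrow> norm (br Z z) \<le> w z * norm Z" "\<And>z. z \<in> set zs \<Longrightarrow> 0 \<le> w z"
  shows "norm (foldl br c zs) \<le> norm c * prod_list (map w zs)"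
  using assms
proof (induction zs arbitrary: c)
  case (Cons z zs)
  have "norm (foldl br (br c z) zs) \<le> norm (br c z) * prod_list (map w zs)"
    using Cons by simp
  also have "\<dots> \<le> (w z * norm c) * prod_list (map w zs)"
    using Cons.prems by (intro mult_right_mono prod_list_nonneg) auto
  finally show ?case by (simp add: mult_ac)
qed simp

context
  fixes br :: "'a::real_normed_vector \<Rightarrow> 'a \<Rightarrow> 'a"
  assumes bilinear: "bounded_bilinear br"
begin

lemma linear_foldl_bracket: "linear f \<Longrightarrow> linear (\<lambda>x. foldl br (f x) zs)"
proof (induction zs arbitrary: f)
  case (Cons z zs)
  have "linear (\<lambda>a. br a z)"
    using bounded_bilinear.bounded_linear_left[OF bilinear] by (rule bounded_linear.linear)
  then have "linear (\<lambda>x. br (f x) z)"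
    using linear_compose[OF Cons.prems] by (simp add: o_def)
  then show ?case using Cons.IH by simp
qed simp

lemma linear_foldl_bracket_update: "m < length zs \<Longrightarrow> linear (\<lambda>x. foldl br c (zs[m := x]))"
proof (induction zs arbitrary: c m)
  case (Cons z zs)
  show ?case
  proof (cases m)
    case 0
    have "linear (br c)"
      using bounded_bilinear.bounded_linear_right[OF bilinear] by (rule bounded_linear.linear)
    then show ?thesis using linear_foldl_bracket[of "br c" zs] 0 by simp
  next
    case (Suc m')
    then show ?thesis using Cons.IH[of m' "br c z"] Cons.prems by simp
  qed
qed simp

lemma linear_iter_bracket_update:
  assumes "m < length zs"
  shows "linear (\<lambda>x. iter_bracket br (zs[m := x]))"
proof (cases zs)
  case (Cons z zs')
  with assms show ?thesis
    using linear_foldl_bracket[of "\<lambda>x. x" zs'] linear_foldl_bracket_update[of "m - 1" zs' z]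
      module_hom_ident
    by (cases m) (simp_all add: iter_bracket_def id_def)
qed (use assms in simp)

end

section \<open>Hilbert-Schmidt brackets\<close>

locale hs_bracket =
  fixes B :: "'a::real_inner set" and br :: "'a \<Rightarrow> 'a \<Rightarrow> 'a"
  assumes onb: "orthonormal_basis B"
    and bilinear: "bounded_bilinear br"
    and antisym: "br x y = - br y x"
    and hs_summable: "(\<lambda>(x, y). (norm (br x y))\<^sup>2) summable_on B \<times> B"
begin

lemma bracket_self [simp]: "br x x = 0"
proof -
  have "2 *\<^sub>R br x x = 0"
    using antisym[of x x] by (simp add: scaleR_2 eq_neg_iff_add_eq_0)
  then show ?thesis by simp
qed

lemma norm_bracket_commute: "norm (br x y) = norm (br y x)"
  using antisym[of x y] by simp

definition ad_hs2 :: "'a \<Rightarrow> real" where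
  "ad_hs2 h = (\<Sum>\<^sub>\<infinity>e\<in>B. (norm (br h e))\<^sup>2)"

definition ad_hs :: "'a \<Rightarrow> real" where
  "ad_hs h = sqrt (ad_hs2 h)"

definition hs2 :: real where
  "hs2 = (\<Sum>\<^sub>\<infinity>(x, y)\<in>B \<times> B. (norm (br x y))\<^sup>2)"

lemma ad_hs2_nonneg: "0 \<le> ad_hs2 h"
  unfolding ad_hs2_def by (rule infsum_nonneg) simp

lemma ad_hs_nonneg: "0 \<le> ad_hs h"
  by (simp add: ad_hs_def ad_hs2_nonneg)

lemma ad_hs_squared [simp]: "(ad_hs h)\<^sup>2 = ad_hs2 h"
  by (simp add: ad_hs_def ad_hs2_nonneg)

lemma hs2_nonneg: "0 \<le> hs2"
  unfolding hs2_def by (rule infsum_nonneg) auto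

lemma has_sum_hs2: "((\<lambda>(x, y). (norm (br x y))\<^sup>2) has_sum hs2) (B \<times> B)"
  unfolding hs2_def using hs_summable by (rule has_sum_infsum)

text \<open>Cauchy-Schwarz on finite combinations of basis vectors, extended to \<open>closure (span B)\<close>.
  Row summability is assumed because it is at first only known for \<open>h \<in> B\<close>.\<close>
lemma norm_bracket_sq_le:
  assumes row: "(\<lambda>e. (norm (br h e))\<^sup>2) summable_on B"
  shows "(norm (br y h))\<^sup>2 \<le> ad_hs2 h * (norm y)\<^sup>2"
proof -
  interpret bounded_bilinear br by (rule bilinear)
  have "closed {y. (norm (br y h))\<^sup>2 \<le> ad_hs2 h * (norm y)\<^sup>2}"
    using bounded_linear_left by (intro closed_Collect_le continuous_intros linear_continuous_on)
  moreover have "span B \<subseteq> {y. (norm (br y h))\<^sup>2 \<le> ad_hs2 h * (norm y)\<^sup>2}"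
  proof
    fix y assume "y \<in> span B"
    then obtain t c where t: "finite t" "t \<subseteq> B" and y: "y = (\<Sum>a\<in>t. c a *\<^sub>R a)"
      unfolding span_explicit by blast
    have "norm (br y h) \<le> (\<Sum>a\<in>t. \<bar>c a\<bar> * norm (br a h))"
      unfolding y sum_left scaleR_left by (rule order_trans[OF norm_sum]) simp
    then have "(norm (br y h))\<^sup>2 \<le> (\<Sum>a\<in>t. \<bar>c a\<bar> * norm (br a h))\<^sup>2"
      by (simp add: power_mono)
    also have "\<dots> \<le> (\<Sum>a\<in>t. \<bar>c a\<bar>\<^sup>2) * (\<Sum>a\<in>t. (norm (br h a))\<^sup>2)"
      using Cauchy_Schwarz_ineq_sum[of "\<lambda>a. \<bar>c a\<bar>" "\<lambda>a. norm (br a h)" t]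
      by (simp add: norm_bracket_commute)
    also have "(\<Sum>a\<in>t. \<bar>c a\<bar>\<^sup>2) = (norm y)\<^sup>2"
    proof -
      have "pairwise orthogonal t"
        using t(2) onb pairwise_subset by (auto simp: orthonormal_basis_def)
      then have "pairwise (\<lambda>i j. orthogonal (c i *\<^sub>R i) (c j *\<^sub>R j)) t"
        by (rule pairwise_ortho_scaleR)
      then have "(norm y)\<^sup>2 = (\<Sum>a\<in>t. (norm (c a *\<^sub>R a))\<^sup>2)"
        unfolding y by (rule norm_sum_Pythagorean[OF t(1)])
      also have "\<dots> = (\<Sum>a\<in>t. \<bar>c a\<bar>\<^sup>2)"
        using t(2) onb by (intro sum.cong) (auto simp: orthonormal_basis_def)
      finally show ?thesis by simp
    qed
    also have "(norm y)\<^sup>2 * (\<Sum>a\<in>t. (norm (br h a))\<^sup>2) \<le> (norm y)\<^sup>2 * ad_hs2 h"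
      unfolding ad_hs2_def using t by (intro mult_left_mono finite_sum_le_infsum row) auto
    finally show "y \<in> {y. (norm (br y h))\<^sup>2 \<le> ad_hs2 h * (norm y)\<^sup>2}"
      by (simp add: mult.commute)
  qed
  ultimately have "closure (span B) \<subseteq> {y. (norm (br y h))\<^sup>2 \<le> ad_hs2 h * (norm y)\<^sup>2}"
    by (rule closure_minimal[rotated])
  then show ?thesis
    using onb by (auto simp: orthonormal_basis_def)
qed

lemma has_sum_ad_hs2_basis: "(ad_hs2 has_sum hs2) B"
proof (rule has_sum_SigmaD[OF has_sum_hs2])
  fix x assume "x \<in> B"
  then have "(\<lambda>e. (norm (br x e))\<^sup>2) summable_on B"
    using summable_on_SigmaD1[of "\<lambda>x e. (norm (br x e))\<^sup>2" B "\<lambda>_. B"] hs_summable by simp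
  then show "((\<lambda>e. (\<lambda>(x, y). (norm (br x y))\<^sup>2) (x, e)) has_sum ad_hs2 x) B"
    unfolding ad_hs2_def by (simp add: has_sum_infsum)
qed

lemma row_summable: "(\<lambda>e. (norm (br h e))\<^sup>2) summable_on B"
proof (rule summable_on_comparison_test)
  show "(\<lambda>e. ad_hs2 e * (norm h)\<^sup>2) summable_on B"
    using has_sum_ad_hs2_basis by (intro summable_on_cmult_left has_sum_imp_summable)
  fix e assume "e \<in> B"
  then have "(\<lambda>e'. (norm (br e e'))\<^sup>2) summable_on B"
    using summable_on_SigmaD1[of "\<lambda>x e. (norm (br x e))\<^sup>2" B "\<lambda>_. B"] hs_summable by simp
  then show "(norm (br h e))\<^sup>2 \<le> ad_hs2 e * (norm h)\<^sup>2"
    by (rule norm_bracket_sq_le)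
qed simp

lemma has_sum_ad_hs2: "((\<lambda>e. (norm (br h e))\<^sup>2) has_sum ad_hs2 h) B"
  unfolding ad_hs2_def using row_summable by (rule has_sum_infsum)

lemma norm_bracket_le_ad_hs: "norm (br y h) \<le> ad_hs h * norm y"
proof (rule power2_le_imp_le)
  show "(norm (br y h))\<^sup>2 \<le> (ad_hs h * norm y)\<^sup>2"
    using norm_bracket_sq_le[OF row_summable] by (simp add: power_mult_distrib)
qed (simp add: ad_hs_nonneg)

lemma ad_hs2_le: "ad_hs2 h \<le> hs2 * (norm h)\<^sup>2"
proof -
  have "ad_hs2 h \<le> (\<Sum>\<^sub>\<infinity>e\<in>B. ad_hs2 e * (norm h)\<^sup>2)"
    unfolding ad_hs2_def[of h]
  proof (rule infsum_mono)
    show "(\<lambda>e. ad_hs2 e * (norm h)\<^sup>2) summable_on B"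
      using has_sum_ad_hs2_basis by (intro summable_on_cmult_left has_sum_imp_summable)
  qed (simp_all add: row_summable norm_bracket_sq_le[OF row_summable])
  also have "\<dots> = hs2 * (norm h)\<^sup>2"
    using has_sum_ad_hs2_basis by (simp add: infsum_cmult_left' infsumI)
  finally show ?thesis .
qed

lemma has_sum_bracket_row: "((\<lambda>(x, y). (norm (br x y))\<^sup>2) has_sum ad_hs2 x) ({x} \<times> B)"
proof -
  have "({x} \<times> B) = Pair x ` B" by auto
  then show ?thesis
    using has_sum_ad_hs2[of x] by (simp add: has_sum_reindex inj_on_def o_def)
qed

lemma has_sum_bracket_column: "((\<lambda>(x, y). (norm (br x y))\<^sup>2) has_sum ad_hs2 y) (B \<times> {y})"
  using has_sum_bracket_row[of y] by (subst has_sum_swap) (simp add: norm_bracket_commute)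

lemma norm_bracket_sq_le_hs2: "(norm (br x y))\<^sup>2 \<le> hs2 * (norm x)\<^sup>2 * (norm y)\<^sup>2"
proof -
  have "(norm (br x y))\<^sup>2 \<le> ad_hs2 y * (norm x)\<^sup>2"
    by (rule norm_bracket_sq_le[OF row_summable])
  also have "\<dots> \<le> hs2 * (norm y)\<^sup>2 * (norm x)\<^sup>2"
    by (intro mult_right_mono ad_hs2_le) simp
  finally show ?thesis by (simp add: mult_ac)
qed

end

section \<open>The bracket word of a summand\<close>

lemma p_of_q_of_sum: "set \<alpha> \<subseteq> {1, 2} \<Longrightarrow> p_of \<alpha> + 2 * q_of \<alpha> = sum_list \<alpha>"
  by (induction \<alpha>) (auto simp: p_of_def q_of_def)

lemma interleave_map:
  assumes "set \<alpha> \<subseteq> {1, 2}" "length xs = p_of \<alpha>" "length ys = q_of \<alpha>"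
  shows "interleave \<alpha> (map f xs) (map g ys) = map (case_sum f g) (interleave \<alpha> (map Inl xs) (map Inr ys))"
  using assms
proof (induction \<alpha> arbitrary: xs ys)
  case (Cons a as)
  show ?case
  proof (cases "a = 1")
    case True
    with Cons.prems show ?thesis
      using Cons.IH[of "tl xs" ys] by (cases xs) (auto simp: p_of_def q_of_def)
  next
    case False
    with Cons.prems have "a = 2" by auto
    with Cons.prems show ?thesis
      using Cons.IH[of xs "tl ys"] by (cases ys) (auto simp: p_of_def q_of_def)
  qed
qed simp

lemma mset_interleave:
  assumes "set \<alpha> \<subseteq> {1, 2}" "length xs = p_of \<alpha>" "length ys = q_of \<alpha>"
  shows "mset (interleave \<alpha> xs ys) = mset xs + mset ys + mset ys"
  using assms
proof (induction \<alpha> arbitrary: xs ys)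
  case Nil
  then show ?case by (simp add: p_of_def q_of_def)
next
  case (Cons a as)
  show ?case
  proof (cases "a = 1")
    case True
    with Cons.prems show ?thesis
      using Cons.IH[of "tl xs" ys] by (cases xs) (auto simp: p_of_def q_of_def)
  next
    case False
    with Cons.prems have "a = 2" by auto
    with Cons.prems show ?thesis
      using Cons.IH[of xs "tl ys"] by (cases ys) (auto simp: p_of_def q_of_def)
  qed
qed

lemma count_mset_eq_1_obtain_index:
  assumes "count (mset xs) v = 1"
  obtains m where "m < length xs" "xs ! m = v" "\<And>m'. m' < length xs \<Longrightarrow> xs ! m' = v \<Longrightarrow> m' = m"
proof -
  have "card {i. i < length xs \<and> v = xs ! i} = 1"
    using assms unfolding count_mset count_list_eq_length_filter length_filter_conv_card .
  then obtain m where "{i. i < length xs \<and> v = xs ! i} = {m}"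
    by (auto simp: card_1_singleton_iff)
  then have index: "i < length xs \<and> v = xs ! i \<longleftrightarrow> i = m" for i
    by (simp add: set_eq_iff)
  show ?thesis
  proof (rule that)
    show "m < length xs" "xs ! m = v"
      using index[of m] by simp_all
    show "m' = m" if "m' < length xs" "xs ! m' = v" for m'
      using index[of m'] that by simp
  qed
qed

text \<open>The summand of \<open>Fhat\<close> is the bracket of a fixed word in the labels \<open>Inl a\<close> (standing for
  \<open>k\<^sub>a\<close>) and \<open>Inr j\<close> (standing for \<open>h\<^sub>j\<close>); every \<open>Inl a\<close> occurs once and every \<open>Inr j\<close> twice.\<close>
locale bracket_word =
  fixes n :: nat and \<sigma> :: "nat \<Rightarrow> nat" and \<alpha> :: "nat list"
  assumes perm: "\<sigma> permutes {..<n}"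
    and digits: "set \<alpha> \<subseteq> {1, 2}"
    and sum_digits: "sum_list \<alpha> = n"
    and two_le_n: "2 \<le> n"
begin

abbreviation "p \<equiv> p_of \<alpha>"
abbreviation "q \<equiv> q_of \<alpha>"

definition labels :: "(nat + nat) set" where
  "labels = Inl ` {..<p} \<union> Inr ` {..<q}"

definition base_word :: "(nat + nat) list" where
  "base_word = interleave \<alpha> (map Inl [0..<p]) (map Inr [0..<q])"

definition word :: "(nat + nat) list" where
  "word = permute_list \<sigma> base_word"

definition label_value :: "'a list \<Rightarrow> 'a list \<Rightarrow> nat + nat \<Rightarrow> 'a" where
  "label_value ks hs = case_sum (nth ks) (nth hs)"

lemma finite_labels: "finite labels"
  by (simp add: labels_def)

lemma card_labels: "card labels = p + q"
  unfolding labels_def by (subst card_Un_disjoint) (auto simp: card_image)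

lemma mset_base_word: "mset base_word = mset (map Inr [0..<q]) + mset (map Inl [0..<p] @ map Inr [0..<q])"
  unfolding base_word_def using mset_interleave[OF digits, of "map Inl [0..<p]" "map Inr [0..<q]"]
  by simp

lemma length_base_word: "length base_word = n"
  using arg_cong[OF mset_base_word, of size] p_of_q_of_sum[OF digits] sum_digits by simp

lemma mset_word: "mset word = mset_set (Inr ` {..<q}) + mset_set labels"
proof -
  have "mset word = mset base_word"
    unfolding word_def using perm length_base_word by (intro mset_permute_list) simp
  also have "\<dots> = mset_set (Inr ` {..<q}) + mset_set labels"
    unfolding mset_base_word labels_def
    by (subst (1 2) mset_set_set[symmetric]) (auto simp: distinct_map lessThan_atLeast0)
  finally show ?thesis .
qed

lemma set_word: "set word = labels"
  using arg_cong[OF mset_word, of set_mset] finite_labels by (auto simp: labels_def)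

lemma length_word: "length word = n"
  by (simp add: word_def length_base_word)

lemma word_Cons: "word = word ! 0 # word ! 1 # drop 2 word"
proof -
  have "0 < length word" "1 < length word"
    using length_word two_le_n by simp_all
  then show ?thesis
    using Cons_nth_drop_Suc[of 0 word] Cons_nth_drop_Suc[of 1 word] by (simp add: numeral_2_eq_2)
qed

lemma word_heads_in_labels: "word ! 0 \<in> labels" "word ! 1 \<in> labels"
  using nth_mem[of 0 word] nth_mem[of 1 word] length_word two_le_n by (simp_all add: set_word)

lemma mset_word_tail:
  assumes "word ! 0 \<noteq> word ! 1"
  shows "mset (drop 2 word) = mset_set (Inr ` {..<q}) + mset_set (labels - {word ! 0, word ! 1})"
proof -
  have heads: "{word ! 0, word ! 1} \<subseteq> labels"
    using word_heads_in_labels by auto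
  have pair: "mset_set {word ! 0, word ! 1} = {#word ! 0, word ! 1#}"
    using assms by simp
  have "mset (drop 2 word) = mset word - {#word ! 0, word ! 1#}"
    by (subst (2) word_Cons) simp
  also have "\<dots> = mset_set (Inr ` {..<q}) + (mset_set labels - {#word ! 0, word ! 1#})"
    unfolding mset_word
    by (rule multiset_diff_union_assoc)
      (use subset_imp_msubset_mset_set[OF heads finite_labels] in \<open>simp only: pair\<close>)
  also have "mset_set labels - {#word ! 0, word ! 1#} = mset_set (labels - {word ! 0, word ! 1})"
    unfolding mset_set_Diff[OF finite_labels heads] pair ..
  finally show ?thesis .
qed

lemma count_word_Inl: "a < p \<Longrightarrow> count (mset word) (Inl a) = 1"
  by (simp add: mset_word labels_def count_mset_set' image_iff)

lemma Fhat_term_eq: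
  assumes "length ks = p" "length hs = q"
  shows "Fhat_term br n \<sigma> \<alpha> ks hs = iter_bracket br (map (label_value ks hs) word)"
proof -
  have "interleave \<alpha> ks hs = interleave \<alpha> (map (nth ks) [0..<p]) (map (nth hs) [0..<q])"
    by (simp add: assms(1,2)[symmetric] map_nth)
  also have "\<dots> = map (label_value ks hs) base_word"
    unfolding label_value_def base_word_def by (rule interleave_map[OF digits]) simp_all
  finally have "map (\<lambda>i. interleave \<alpha> ks hs ! \<sigma> i) [0..<n] = permute_list \<sigma> (map (label_value ks hs) base_word)"
    by (simp add: permute_list_def length_base_word)
  also have "\<dots> = map (label_value ks hs) word"
    unfolding word_def using perm length_base_word by (intro permute_list_map) simp
  finally have "map (\<lambda>i. interleave \<alpha> ks hs ! \<sigma> i) [0..<n] = map (label_value ks hs) word" .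
  then show ?thesis
    unfolding Fhat_term_def perm_bracket_def by simp
qed

end

section \<open>Estimates for the series\<close>

locale Fhat_setting = hs_bracket B br + bracket_word n \<sigma> \<alpha>
  for B :: "'a::{real_inner, complete_space} set" and br n \<sigma> \<alpha>
begin

abbreviation "l0 \<equiv> word ! 0"
abbreviation "l1 \<equiv> word ! 1"

text \<open>The summation over \<open>h\<^sub>1, \<dots>, h\<^sub>q \<in> B\<close> with \<open>k\<^sub>1, \<dots>, k\<^sub>p\<close> fixed is rewritten as a sum over
  all assignments of vectors to labels, where the label \<open>Inl a\<close> may only carry \<open>k\<^sub>a\<close>.\<close>
definition slots :: "'a list \<Rightarrow> nat + nat \<Rightarrow> 'a set" where
  "slots ks = case_sum (\<lambda>a. {ks ! a}) (\<lambda>_. B)"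

definition slot_mass :: "'a list \<Rightarrow> nat + nat \<Rightarrow> real" where
  "slot_mass ks = case_sum (\<lambda>a. (norm (ks ! a))\<^sup>2) (\<lambda>_. 1)"

definition slot_sum :: "'a list \<Rightarrow> nat + nat \<Rightarrow> real" where
  "slot_sum ks = case_sum (\<lambda>a. ad_hs2 (ks ! a)) (\<lambda>_. hs2)"

definition pair_sum :: "'a list \<Rightarrow> real" where
  "pair_sum ks = (\<Sum>\<^sub>\<infinity>(x, y)\<in>slots ks l0 \<times> slots ks l1. (norm (br x y))\<^sup>2)"

definition word_value :: "(nat + nat \<Rightarrow> 'a) \<Rightarrow> 'a" where
  "word_value g = iter_bracket br (map g word)"

definition summation_weight :: "(nat + nat \<Rightarrow> 'a) \<Rightarrow> real" where
  "summation_weight g = (\<Prod>j<q. ad_hs (g (Inr j)))"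

definition head_weight :: "(nat + nat \<Rightarrow> 'a) \<Rightarrow> real" where
  "head_weight g = norm (br (g l0) (g l1)) * (\<Prod>l\<in>labels - {l0, l1}. ad_hs (g l))"

definition head_energy :: "'a list \<Rightarrow> real" where
  "head_energy ks = (\<Sum>\<^sub>\<infinity>g\<in>PiE labels (slots ks). (head_weight g)\<^sup>2)"

lemma prod_labels: "(\<Prod>l\<in>labels. f l) = (\<Prod>a<p. f (Inl a)) * (\<Prod>j<q. f (Inr j))"
  unfolding labels_def by (subst prod.union_disjoint) (auto simp: prod.reindex)

lemma has_sum_slot_sum: "(ad_hs2 has_sum slot_sum ks l) (slots ks l)"
  by (cases l) (simp_all add: slots_def slot_sum_def has_sum_ad_hs2_basis has_sum_finiteI)

lemma slot_sum_le: "slot_sum ks l \<le> hs2 * slot_mass ks l"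
  by (cases l) (simp_all add: slot_sum_def slot_mass_def ad_hs2_le)

lemma has_sum_pair_sum: "((\<lambda>(x, y). (norm (br x y))\<^sup>2) has_sum pair_sum ks) (slots ks l0 \<times> slots ks l1)"
proof -
  have "(\<lambda>(x, y). (norm (br x y))\<^sup>2) summable_on slots ks l0 \<times> slots ks l1"
    by (cases l0; cases l1)
      (use has_sum_hs2 has_sum_bracket_row has_sum_bracket_column in \<open>auto simp: slots_def summable_on_def intro: has_sum_finite\<close>)
  then show ?thesis
    unfolding pair_sum_def by (rule has_sum_infsum)
qed

lemma pair_sum_le: "pair_sum ks \<le> hs2 * slot_mass ks l0 * slot_mass ks l1"
proof -
  have row: "infsum (\<lambda>(x, y). (norm (br x y))\<^sup>2) ({x} \<times> B) = ad_hs2 x"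
    and column: "infsum (\<lambda>(x, y). (norm (br x y))\<^sup>2) (B \<times> {x}) = ad_hs2 x" for x
    using has_sum_bracket_row has_sum_bracket_column by (blast intro: infsumI)+
  show ?thesis
    unfolding pair_sum_def
    by (cases l0; cases l1)
      (simp_all add: slots_def slot_mass_def row column hs2_def[symmetric] ad_hs2_le
        norm_bracket_sq_le_hs2)
qed

lemma slot_sum_nonneg: "0 \<le> slot_sum ks l"
  by (cases l) (simp_all add: slot_sum_def ad_hs2_nonneg hs2_nonneg)

lemma word_value_restrict: "word_value (restrict g labels) = word_value g"
  unfolding word_value_def using set_word by (intro arg_cong[where f = "iter_bracket br"]) auto

lemma PiE_slots_Inl: "g \<in> PiE labels (slots ks) \<Longrightarrow> a < p \<Longrightarrow> g (Inl a) = ks ! a"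
  by (drule PiE_mem[of _ _ _ "Inl a"]) (auto simp: labels_def slots_def)

lemma PiE_slots_Inr: "g \<in> PiE labels (slots ks) \<Longrightarrow> j < q \<Longrightarrow> g (Inr j) \<in> B"
  by (drule PiE_mem[of _ _ _ "Inr j"]) (auto simp: labels_def slots_def)

lemma has_sum_Fhat_term_iff:
  assumes ks: "length ks = p"
  shows "(Fhat_term br n \<sigma> \<alpha> ks has_sum s) (tuples B q) \<longleftrightarrow> (word_value has_sum s) (PiE labels (slots ks))"
proof (rule has_sum_reindex_bij_witness[where j = "\<lambda>hs. restrict (label_value ks hs) labels"
      and i = "\<lambda>g. map (\<lambda>j. g (Inr j)) [0..<q]"])
  fix hs assume "hs \<in> tuples B q"
  then have hs: "length hs = q" "set hs \<subseteq> B"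
    by (simp_all add: tuples_def)
  have hs_B: "hs ! j \<in> B" if "j < q" for j
    using hs that nth_mem[of j hs] by auto
  show "map (\<lambda>j. restrict (label_value ks hs) labels (Inr j)) [0..<q] = hs"
    using hs by (intro nth_equalityI) (simp_all add: labels_def label_value_def)
  show "restrict (label_value ks hs) labels \<in> PiE labels (slots ks)"
    using hs_B by (auto simp: labels_def label_value_def slots_def)
  show "word_value (restrict (label_value ks hs) labels) = Fhat_term br n \<sigma> \<alpha> ks hs"
    using Fhat_term_eq[OF ks hs(1)] word_value_restrict[of "label_value ks hs"]
    by (simp add: word_value_def)
next
  fix g assume g: "g \<in> PiE labels (slots ks)"
  show "restrict (label_value ks (map (\<lambda>j. g (Inr j)) [0..<q])) labels = g"
  proof
    fix l show "restrict (label_value ks (map (\<lambda>j. g (Inr j)) [0..<q])) labels l = g l"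
      using PiE_slots_Inl[OF g] PiE_arb[OF g, of l] by (cases l) (auto simp: labels_def label_value_def)
  qed
  show "map (\<lambda>j. g (Inr j)) [0..<q] \<in> tuples B q"
    using PiE_slots_Inr[OF g] by (auto simp: tuples_def)
qed simp

lemma norm_word_value_le: "norm (word_value g) \<le> summation_weight g * head_weight g"
proof -
  have word_value_foldl: "word_value g = foldl br (br (g l0) (g l1)) (map g (drop 2 word))"
    unfolding word_value_def by (subst word_Cons) (simp add: iter_bracket_def)
  have foldl_bound: "norm (word_value g) \<le> norm (br (g l0) (g l1)) * prod_list (map ad_hs (map g (drop 2 word)))"
    unfolding word_value_foldl by (rule norm_foldl_le) (simp_all add: norm_bracket_le_ad_hs ad_hs_nonneg)
  have weights_nonneg: "0 \<le> summation_weight g" "0 \<le> (\<Prod>l\<in>labels - {l0, l1}. ad_hs (g l))"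
    by (simp_all add: summation_weight_def prod_nonneg ad_hs_nonneg)
  show ?thesis
  proof (cases "l0 = l1")
    case True
    then show ?thesis
      using foldl_bound weights_nonneg by (simp add: head_weight_def)
  next
    case False
    have "prod_list (map ad_hs (map g (drop 2 word))) = prod_mset (image_mset (ad_hs \<circ> g) (mset (drop 2 word)))"
      using prod_mset_prod_list[of "map (ad_hs \<circ> g) (drop 2 word)"] by simp
    also have "\<dots> = summation_weight g * (\<Prod>l\<in>labels - {l0, l1}. ad_hs (g l))"
      unfolding mset_word_tail[OF False] summation_weight_def
      by (simp add: prod_unfold_prod_mset[symmetric] prod.reindex)
    finally show ?thesis
      using foldl_bound by (simp add: head_weight_def mult_ac)
  qed
qed

lemma has_sum_summation_weight_sq:
  assumes "length ks = p"
  shows "((\<lambda>g. (summation_weight g)\<^sup>2) has_sum hs2 ^ q) (PiE labels (slots ks))"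
proof -
  let ?u = "\<lambda>l. case_sum (\<lambda>_ _. 1) (\<lambda>_. ad_hs2) l"
  have "((\<lambda>g. \<Prod>l\<in>labels. ?u l (g l)) has_sum (\<Prod>l\<in>labels. case_sum (\<lambda>_. 1) (\<lambda>_. hs2) l))
          (PiE labels (slots ks))"
  proof (rule has_sum_prod_PiE[OF finite_labels])
    fix l show "(?u l has_sum case_sum (\<lambda>_. 1) (\<lambda>_. hs2) l) (slots ks l)"
      by (cases l) (simp_all add: slots_def has_sum_ad_hs2_basis has_sum_finiteI)
  qed (auto split: sum.split simp: ad_hs2_nonneg)
  then show ?thesis
    by (simp add: prod_labels summation_weight_def prod_power_distrib)
qed

lemma has_sum_head_weight_sq:
  assumes "l0 \<noteq> l1"
    and "((\<lambda>(x, y). (norm (br x y))\<^sup>2) has_sum s0) (S l0 \<times> S l1)"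
    and "\<And>l. l \<in> labels - {l0, l1} \<Longrightarrow> (ad_hs2 has_sum s l) (S l)"
  shows "((\<lambda>g. (head_weight g)\<^sup>2) has_sum s0 * (\<Prod>l\<in>labels - {l0, l1}. s l)) (PiE labels S)"
proof -
  have "(head_weight g)\<^sup>2 = (\<lambda>(x, y). (norm (br x y))\<^sup>2) (g l0, g l1) * (\<Prod>l\<in>labels - {l0, l1}. ad_hs2 (g l))" for g
    by (simp add: head_weight_def power_mult_distrib prod_power_distrib)
  moreover have "((\<lambda>g. (\<lambda>(x, y). (norm (br x y))\<^sup>2) (g l0, g l1) * (\<Prod>l\<in>labels - {l0, l1}. ad_hs2 (g l)))
      has_sum s0 * (\<Prod>l\<in>labels - {l0, l1}. s l)) (PiE labels S)"
    using assms word_heads_in_labels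
    by (intro has_sum_PiE_pair finite_labels) (auto simp: ad_hs2_nonneg)
  ultimately show ?thesis by simp
qed

lemma head_weight_diagonal: "l0 = l1 \<Longrightarrow> head_weight g = 0"
  by (simp add: head_weight_def)

lemma has_sum_head_energy:
  assumes "length ks = p"
  shows "((\<lambda>g. (head_weight g)\<^sup>2) has_sum head_energy ks) (PiE labels (slots ks))"
proof -
  have "(\<lambda>g. (head_weight g)\<^sup>2) summable_on PiE labels (slots ks)"
  proof (cases "l0 = l1")
    case False
    show ?thesis
      using has_sum_head_weight_sq[OF False has_sum_pair_sum[of ks] has_sum_slot_sum[of ks]]
      by (rule has_sum_imp_summable)
  qed (simp add: head_weight_diagonal)
  then show ?thesis
    unfolding head_energy_def by (rule has_sum_infsum)
qed

lemma Fhat_term_summable_and_norm_le: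
  assumes ks: "length ks = p"
  shows "Fhat_term br n \<sigma> \<alpha> ks summable_on tuples B q"
    and "norm (Fhat B br n \<sigma> \<alpha> ks) \<le> sqrt (hs2 ^ q) * sqrt (head_energy ks)"
proof -
  let ?X = "PiE labels (slots ks)"
  have norm_summable: "(\<lambda>g. norm (word_value g)) summable_on ?X"
    and norm_le: "(\<Sum>\<^sub>\<infinity>g\<in>?X. norm (word_value g)) \<le> sqrt (hs2 ^ q) * sqrt (head_energy ks)"
    using Cauchy_Schwarz_infsum[OF _ _ has_sum_summation_weight_sq[OF ks] has_sum_head_energy[OF ks]]
      norm_word_value_le by auto
  obtain s where s: "(word_value has_sum s) ?X"
    using norm_summable_imp_summable_on_complete[OF norm_summable] by (auto simp: summable_on_def)
  then have "(Fhat_term br n \<sigma> \<alpha> ks has_sum s) (tuples B q)"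
    using has_sum_Fhat_term_iff[OF ks] by blast
  then show "Fhat_term br n \<sigma> \<alpha> ks summable_on tuples B q"
    and "norm (Fhat B br n \<sigma> \<alpha> ks) \<le> sqrt (hs2 ^ q) * sqrt (head_energy ks)"
    using norm_le norm_infsum_bound[OF norm_summable] infsumI[OF s]
    by (auto simp: Fhat_def summable_on_def infsumI)
qed

lemma prod_labels_heads:
  assumes "l0 \<noteq> l1"
  shows "(\<Prod>l\<in>labels. f l) = f l0 * f l1 * (\<Prod>l\<in>labels - {l0, l1}. f l)"
proof -
  have "(\<Prod>l\<in>labels. f l) = f l0 * (\<Prod>l\<in>labels - {l0}. f l)"
    using word_heads_in_labels by (intro prod.remove finite_labels)
  also have "(\<Prod>l\<in>labels - {l0}. f l) = f l1 * (\<Prod>l\<in>labels - {l0} - {l1}. f l)"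
    using word_heads_in_labels assms by (intro prod.remove) (auto simp: finite_labels)
  finally show ?thesis
    by (simp add: Diff_insert2 [symmetric] mult_ac)
qed

lemma prod_slot_mass: "(\<Prod>l\<in>labels. slot_mass ks l) = (\<Prod>a<p. norm (ks ! a))\<^sup>2"
  by (simp add: prod_labels slot_mass_def prod_power_distrib)

lemma head_energy_le:
  assumes ks: "length ks = p"
  shows "head_energy ks \<le> hs2 ^ (p + q - 1) * (\<Prod>a<p. norm (ks ! a))\<^sup>2"
proof (cases "l0 = l1")
  case True
  then show ?thesis
    by (simp add: head_energy_def head_weight_diagonal hs2_nonneg)
next
  case False
  let ?R = "labels - {l0, l1}"
  have mass_nonneg: "0 \<le> slot_mass ks l" for l
    by (cases l) (simp_all add: slot_mass_def)
  have card_R: "card ?R = p + q - 2"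
    using word_heads_in_labels False by (simp add: card_Diff_subset finite_labels card_labels)
  have "card {l0, l1} \<le> card labels"
    using word_heads_in_labels by (intro card_mono finite_labels) auto
  then have exponent: "p + q - 1 = Suc (card ?R)"
    using False card_R card_labels by simp
  have "head_energy ks = pair_sum ks * (\<Prod>l\<in>?R. slot_sum ks l)"
    using has_sum_head_energy[OF ks] has_sum_head_weight_sq[OF False has_sum_pair_sum has_sum_slot_sum]
    by (rule has_sum_unique)
  also have "\<dots> \<le> (hs2 * slot_mass ks l0 * slot_mass ks l1) * (\<Prod>l\<in>?R. hs2 * slot_mass ks l)"
    by (intro mult_mono pair_sum_le prod_mono conjI slot_sum_le slot_sum_nonneg prod_nonneg
        mult_nonneg_nonneg hs2_nonneg mass_nonneg)
  also have "\<dots> = hs2 ^ (p + q - 1) * (\<Prod>l\<in>labels. slot_mass ks l)"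
    unfolding exponent prod_labels_heads[OF False] by (simp add: prod.distrib mult_ac)
  finally show ?thesis
    unfolding prod_slot_mass .
qed

lemma summable_on_Sigma_slots_iff:
  "(\<lambda>(ks, g). F g) summable_on Sigma (tuples B p) (\<lambda>ks. PiE labels (slots ks))
    \<longleftrightarrow> F summable_on PiE labels (\<lambda>_. B)"
proof (rule summable_on_reindex_bij_witness[where j = snd and i = "\<lambda>g. (map (\<lambda>a. g (Inl a)) [0..<p], g)"])
  fix z assume "z \<in> Sigma (tuples B p) (\<lambda>ks. PiE labels (slots ks))"
  then obtain ks g where z: "z = (ks, g)" and ks: "ks \<in> tuples B p" and g: "g \<in> PiE labels (slots ks)"
    by auto
  have "length ks = p" "set ks \<subseteq> B"
    using ks by (simp_all add: tuples_def)
  then show "(map (\<lambda>a. snd z (Inl a)) [0..<p], snd z) = z"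
    using PiE_slots_Inl[OF g] by (auto simp: z intro: nth_equalityI)
  have "slots ks l \<subseteq> B" if "l \<in> labels" for l
    using that \<open>length ks = p\<close> \<open>set ks \<subseteq> B\<close> by (auto simp: labels_def slots_def)
  then show "snd z \<in> PiE labels (\<lambda>_. B)"
    using g PiE_mono[of labels "slots ks" "\<lambda>_. B"] by (auto simp: z)
next
  fix g assume "g \<in> PiE labels (\<lambda>_. B)"
  then show "(map (\<lambda>a. g (Inl a)) [0..<p], g) \<in> Sigma (tuples B p) (\<lambda>ks. PiE labels (slots ks))"
    by (auto simp: tuples_def labels_def slots_def PiE_iff)
qed auto

lemma summable_head_energy: "head_energy summable_on tuples B p"
proof -
  have "(\<lambda>g. (head_weight g)\<^sup>2) summable_on PiE labels (\<lambda>_. B)"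
  proof (cases "l0 = l1")
    case False
    have "((\<lambda>g. (head_weight g)\<^sup>2) has_sum hs2 * (\<Prod>l\<in>labels - {l0, l1}. hs2)) (PiE labels (\<lambda>_. B))"
      by (rule has_sum_head_weight_sq[OF False]) (simp_all add: has_sum_hs2 has_sum_ad_hs2_basis)
    then show ?thesis by (rule has_sum_imp_summable)
  qed (simp add: head_weight_diagonal)
  then have "(\<lambda>(ks, g). (head_weight g)\<^sup>2) summable_on Sigma (tuples B p) (\<lambda>ks. PiE labels (slots ks))"
    by (simp only: summable_on_Sigma_slots_iff)
  from summable_on_SigmaD[OF this] show ?thesis
    unfolding head_energy_def
    using has_sum_imp_summable[OF has_sum_head_energy] by (simp add: tuples_def)
qed

lemma label_value_update:
  assumes "length ks = p" "i < p" and m: "m < length word" "word ! m = Inl i"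
    and unique: "\<And>m'. m' < length word \<Longrightarrow> word ! m' = Inl i \<Longrightarrow> m' = m"
  shows "map (label_value (ks[i := x]) hs) word = (map (label_value ks hs) word)[m := x]"
proof (rule nth_equalityI)
  fix k assume "k < length (map (label_value (ks[i := x]) hs) word)"
  then have "k < length word" by simp
  show "map (label_value (ks[i := x]) hs) word ! k = (map (label_value ks hs) word)[m := x] ! k"
  proof (cases "k = m")
    case True
    then show ?thesis
      using assms(1,2,4) \<open>k < length word\<close> by (simp add: label_value_def)
  next
    case False
    then have "word ! k \<noteq> Inl i"
      using unique \<open>k < length word\<close> by blast
    then have "label_value (ks[i := x]) hs (word ! k) = label_value ks hs (word ! k)"
      by (cases "word ! k") (simp_all add: label_value_def)
    then show ?thesis
      using False \<open>k < length word\<close> by simp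
  qed
qed simp

lemma Fhat_linear:
  assumes ks: "length ks = p" and i: "i < p"
  shows "linear (\<lambda>x. Fhat B br n \<sigma> \<alpha> (ks[i := x]))"
proof -
  obtain m where m: "m < length word" "word ! m = Inl i"
    and unique: "\<And>m'. m' < length word \<Longrightarrow> word ! m' = Inl i \<Longrightarrow> m' = m"
    using count_mset_eq_1_obtain_index[OF count_word_Inl[OF i]] by blast
  define T where "T hs x = iter_bracket br ((map (label_value ks hs) word)[m := x])" for hs x
  have linear_T: "linear (T hs)" for hs
    unfolding T_def using m(1) by (intro linear_iter_bracket_update[OF bilinear]) simp
  have length_update: "length (ks[i := x]) = p" for x
    using ks by simp
  have term_T: "Fhat_term br n \<sigma> \<alpha> (ks[i := x]) hs = T hs x" if "hs \<in> tuples B q" for hs x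
    using that Fhat_term_eq[OF length_update] label_value_update[OF ks i m unique]
    by (simp add: T_def tuples_def)
  have Fhat_T: "Fhat B br n \<sigma> \<alpha> (ks[i := x]) = (\<Sum>\<^sub>\<infinity>hs\<in>tuples B q. T hs x)" for x
    unfolding Fhat_def by (rule infsum_cong) (rule term_T)
  have summable_T: "(\<lambda>hs. T hs x) summable_on tuples B q" for x
    using Fhat_term_summable_and_norm_le(1)[OF length_update[of x]]
    by (rule summable_on_cong[THEN iffD1, rotated]) (rule term_T)
  show ?thesis
  proof (rule linearI)
    fix x y
    show "Fhat B br n \<sigma> \<alpha> (ks[i := x + y]) = Fhat B br n \<sigma> \<alpha> (ks[i := x]) + Fhat B br n \<sigma> \<alpha> (ks[i := y])"
      unfolding Fhat_T linear_add[OF linear_T] by (rule infsum_add[OF summable_T summable_T])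
  next
    fix c x
    show "Fhat B br n \<sigma> \<alpha> (ks[i := c *\<^sub>R x]) = c *\<^sub>R Fhat B br n \<sigma> \<alpha> (ks[i := x])"
      unfolding Fhat_T linear_scale[OF linear_T] by (rule infsum_scaleR_right)
  qed
qed

lemma Fhat_bounded: "\<exists>C. \<forall>ks. length ks = p \<longrightarrow> norm (Fhat B br n \<sigma> \<alpha> ks) \<le> C * prod_list (map norm ks)"
proof (intro exI allI impI)
  fix ks :: "'a list" assume ks: "length ks = p"
  let ?P = "\<Prod>a<p. norm (ks ! a)"
  have "prod_list (map norm ks) = ?P"
    using ks by (simp add: prod.list_conv_set_nth lessThan_atLeast0)
  moreover have "norm (Fhat B br n \<sigma> \<alpha> ks) \<le> sqrt (hs2 ^ q) * sqrt (head_energy ks)"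
    by (rule Fhat_term_summable_and_norm_le(2)[OF ks])
  moreover have "\<dots> \<le> sqrt (hs2 ^ q) * sqrt (hs2 ^ (p + q - 1) * ?P\<^sup>2)"
    by (intro mult_left_mono real_sqrt_le_mono head_energy_le[OF ks]) (simp add: hs2_nonneg)
  moreover have "sqrt (hs2 ^ (p + q - 1) * ?P\<^sup>2) = sqrt (hs2 ^ (p + q - 1)) * ?P"
    by (simp add: real_sqrt_mult prod_nonneg)
  ultimately show "norm (Fhat B br n \<sigma> \<alpha> ks) \<le> (sqrt (hs2 ^ q) * sqrt (hs2 ^ (p + q - 1))) * prod_list (map norm ks)"
    by (simp add: mult.assoc)
qed

lemma Fhat_square_summable: "(\<lambda>ks. (norm (Fhat B br n \<sigma> \<alpha> ks))\<^sup>2) summable_on tuples B p"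
proof (rule summable_on_comparison_test)
  show "(\<lambda>ks. hs2 ^ q * head_energy ks) summable_on tuples B p"
    using summable_head_energy by (rule summable_on_cmult_right)
  fix ks assume "ks \<in> tuples B p"
  then have ks: "length ks = p" by (simp add: tuples_def)
  have "0 \<le> head_energy ks"
    using has_sum_head_energy[OF ks] by (rule has_sum_nonneg) simp
  then have "(sqrt (hs2 ^ q) * sqrt (head_energy ks))\<^sup>2 = hs2 ^ q * head_energy ks"
    by (simp add: power_mult_distrib hs2_nonneg)
  moreover have "(norm (Fhat B br n \<sigma> \<alpha> ks))\<^sup>2 \<le> (sqrt (hs2 ^ q) * sqrt (head_energy ks))\<^sup>2"
    using Fhat_term_summable_and_norm_le(2)[OF ks] by (intro power_mono) simp_all
  ultimately show "(norm (Fhat B br n \<sigma> \<alpha> ks))\<^sup>2 \<le> hs2 ^ q * head_energy ks"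
    by simp
qed simp

end

theorem proposition4p1:
  fixes B :: "'a::{real_inner,complete_space} set"
    and br :: "'a \<Rightarrow> 'a \<Rightarrow> 'a"
    and r n :: nat and \<sigma> :: "nat \<Rightarrow> nat" and \<alpha> :: "nat list"
  assumes "countable B" and "orthonormal_basis B"
    and "hs_nilpotent_lie B br r"
    and "n \<in> {2..r}"
    and "\<sigma> permutes {..<n}"
    and "\<alpha> \<in> Jn n"
  shows "(\<forall>ks. length ks = p_of \<alpha> \<longrightarrow>
            Fhat_term br n \<sigma> \<alpha> ks summable_on tuples B (q_of \<alpha>))
       \<and> hilbert_schmidt_multi B (p_of \<alpha>) (Fhat B br n \<sigma> \<alpha>)"
proof -
  have digits: "set \<alpha> \<subseteq> {1, 2}" "sum_list \<alpha> = n"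
    using assms(6) by (auto simp: Jn_def J_def)
  have lie: "bounded_bilinear br" "\<And>x y. br x y = - br y x"
    "(\<lambda>(x, y). (norm (br x y))\<^sup>2) summable_on B \<times> B"
    using assms(3) unfolding hs_nilpotent_lie_def by blast+
  have "2 \<le> n"
    using assms(4) by simp
  have "hs_bracket B br"
    using assms(2) lie by (rule hs_bracket.intro)
  moreover have "bracket_word n \<sigma> \<alpha>"
    using assms(5) digits \<open>2 \<le> n\<close> by (rule bracket_word.intro)
  ultimately interpret Fhat_setting B br n \<sigma> \<alpha>
    by (simp add: Fhat_setting_def)
  show ?thesis
    unfolding hilbert_schmidt_multi_def
    using Fhat_term_summable_and_norm_le(1) Fhat_linear Fhat_bounded Fhat_square_summable by blast
qed

end
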